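(* Let $n\ge1$. The number of symmetric Brauer diagrams on $2n$ strands equals $a_{2n}$, where $a_0=a_1=1$ and $a_m=a_{m-1}+2(m-1)a_{m-2}$ for $m>1$. Consequently, $\mathrm{SBr}(\mathrm{A}_{2n-1})$ is a $\mathbb{Z}[\delta^{\pm1}]$-subalgebra of $\mathrm{Br}(\mathrm{A}_{2n-1})$, free over $\mathbb{Z}[\delta^{\pm1}]$ of rank $a_{2n}$.
   Context: $\mathrm{Br}(\mathrm{A}_{2n-1})$ denotes the classical Brauer algebra on $2n$ strands over $\mathbb{Z}[\delta^{\pm1}]$: it is free with basis the Brauer diagrams, i.e. perfect matchings of the $4n$ dots $(j,1),(j,0)$, $1\le j\le 2n$, with multiplication by concatenation where each closed loop formed is replaced by a factor $\delta$. A Brauer diagram is symmetric if it is invariant under the reflection $(j,\epsilon)\mapsto(2n+1-j,\epsilon)$ of the dots. $\mathrm{SBr}(\mathrm{A}_{2n-1})$ is the $\mathbb{Z}[\delta^{\pm1}]$-linear span of the symmetric Brauer diagrams. *)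

theory Defs
  imports Complex_Main "HOL-Library.Function_Algebras"
begin

text \<open>Dots of the Brauer diagrams on N strands: (j, True) is the top dot (j,1),
  (j, False) is the bottom dot (j,0), for 1 <= j <= N.\<close>
type_synonym dot = "nat \<times> bool"
type_synonym diagram = "dot set set"

definition dots :: "nat \<Rightarrow> dot set" where
  "dots N = {1..N} \<times> UNIV"

definition brauer_diagrams :: "nat \<Rightarrow> diagram set" where
  "brauer_diagrams N = {M. (\<forall>e\<in>M. card e = 2 \<and> e \<subseteq> dots N) \<and> (\<forall>x\<in>dots N. \<exists>!e\<in>M. x \<in> e)}"

definition reflect :: "nat \<Rightarrow> dot \<Rightarrow> dot" where
  "reflect N x = (N + 1 - fst x, snd x)"

definition symmetric_diagram :: "nat \<Rightarrow> diagram \<Rightarrow> bool" where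
  "symmetric_diagram N M \<longleftrightarrow> (\<lambda>e. reflect N ` e) ` M = M"

definition sym_diagrams :: "nat \<Rightarrow> diagram set" where
  "sym_diagrams N = {M \<in> brauer_diagrams N. symmetric_diagram N M}"

fun a_seq :: "nat \<Rightarrow> nat" where
  "a_seq 0 = 1"
| "a_seq (Suc 0) = 1"
| "a_seq (Suc (Suc m)) = a_seq (Suc m) + 2 * (Suc m) * a_seq m"

text \<open>Concatenation: d1 is stacked on top of d2. Vertices of the stacked picture
  are (j, level): level 2 = top row of d1, level 1 = identified middle row
  (bottom of d1 = top of d2), level 0 = bottom row of d2.\<close>
definition up1 :: "dot \<Rightarrow> nat \<times> nat" where
  "up1 x = (fst x, if snd x then 2 else 1)"

definition up2 :: "dot \<Rightarrow> nat \<times> nat" where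
  "up2 x = (fst x, if snd x then 1 else 0)"

definition outer :: "dot \<Rightarrow> nat \<times> nat" where
  "outer x = (fst x, if snd x then 2 else 0)"

definition stack_edges :: "diagram \<Rightarrow> diagram \<Rightarrow> ((nat \<times> nat) \<times> (nat \<times> nat)) set" where
  "stack_edges d1 d2 =
     {(up1 x, up1 y) | x y. {x, y} \<in> d1 \<and> x \<noteq> y} \<union>
     {(up2 x, up2 y) | x y. {x, y} \<in> d2 \<and> x \<noteq> y}"

definition stack_conn :: "diagram \<Rightarrow> diagram \<Rightarrow> ((nat \<times> nat) \<times> (nat \<times> nat)) set" where
  "stack_conn d1 d2 = (stack_edges d1 d2)\<^sup>*"

definition concat :: "nat \<Rightarrow> diagram \<Rightarrow> diagram \<Rightarrow> diagram" where
  "concat N d1 d2 = {{x, y} | x y. x \<in> dots N \<and> y \<in> dots N \<and> x \<noteq> y \<and>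
                        (outer x, outer y) \<in> stack_conn d1 d2}"

definition loops :: "nat \<Rightarrow> diagram \<Rightarrow> diagram \<Rightarrow> nat" where
  "loops N d1 d2 = card {C. \<exists>j\<in>{1..N}. C = stack_conn d1 d2 `` {(j, 1)} \<and>
                              (\<forall>x\<in>dots N. outer x \<notin> C)}"

text \<open>The Brauer algebra over a commutative ring R with parameter delta: elements are
  R-valued functions on diagrams vanishing outside the Brauer diagrams (free module
  with basis the diagrams); multiplication is the bilinear extension of concatenation,
  with each closed loop replaced by a factor delta.\<close>
definition Br :: "nat \<Rightarrow> (diagram \<Rightarrow> 'a::comm_ring_1) set" where
  "Br N = {x. \<forall>D. D \<notin> brauer_diagrams N \<longrightarrow> x D = 0}"

definition basis_elt :: "diagram \<Rightarrow> diagram \<Rightarrow> 'a::comm_ring_1" where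
  "basis_elt D = (\<lambda>E. if E = D then 1 else 0)"

definition br_scale :: "'a::comm_ring_1 \<Rightarrow> (diagram \<Rightarrow> 'a) \<Rightarrow> (diagram \<Rightarrow> 'a)" where
  "br_scale r x = (\<lambda>D. r * x D)"

definition br_mult :: "nat \<Rightarrow> 'a::comm_ring_1 \<Rightarrow> (diagram \<Rightarrow> 'a) \<Rightarrow> (diagram \<Rightarrow> 'a) \<Rightarrow> (diagram \<Rightarrow> 'a)" where
  "br_mult N \<delta> x y = (\<lambda>D. \<Sum>d1\<in>brauer_diagrams N. \<Sum>d2\<in>brauer_diagrams N.
      if concat N d1 d2 = D then x d1 * y d2 * \<delta> ^ loops N d1 d2 else 0)"

definition id_diagram :: "nat \<Rightarrow> diagram" where
  "id_diagram N = {{(j, True), (j, False)} | j. j \<in> {1..N}}"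

definition br_one :: "nat \<Rightarrow> diagram \<Rightarrow> 'a::comm_ring_1" where
  "br_one N = basis_elt (id_diagram N)"

definition SBr :: "nat \<Rightarrow> (diagram \<Rightarrow> 'a::comm_ring_1) set" where
  "SBr N = module.span br_scale (basis_elt ` sym_diagrams N)"

end

theory Submission
  imports Defs
begin

(* A Brauer diagram is a perfect matching of the 2N dots; it is symmetric iff its set of edges
   is closed under the reflection of the dots, which is a fixed-point-free involution when N is
   even.  So the symmetric diagrams are the perfect matchings of a 2m-element set that are
   stable under a fixed-point-free involution sigma.  Classifying such a matching by the
   partner y of one dot x gives the recursion a_m = a_(m-1) + 2(m-1) a_(m-2): either y = sigma x,
   or y is one of the 2(m-1) other dots and then {sigma x, sigma y} is forced as well.

   For the algebra statements, SBr is the set of functions supported on symmetric diagrams, the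
   basis diagrams are independent, and the product of two symmetric elements is symmetric
   because the concatenation of two symmetric diagrams is again a symmetric Brauer diagram.
   That concatenation yields a perfect matching at all is the graph-theoretic heart: in the union
   of two matchings every vertex of degree one lies on a path ending in exactly one other vertex
   of degree one (proved by following the alternating walk), and in the stacked picture the
   degree-one vertices are precisely the top and bottom dots. *)

definition matching :: "'v set \<Rightarrow> 'v set set \<Rightarrow> bool" where
  "matching S M \<longleftrightarrow> (\<forall>e\<in>M. card e = 2 \<and> e \<subseteq> S) \<and> (\<forall>x\<in>S. \<exists>!e\<in>M. x \<in> e)"

lemma brauer_diagrams_matching: "brauer_diagrams N = {M. matching (dots N) M}"
  by (simp add: brauer_diagrams_def matching_def)

lemma matching_edge_subset: "matching S M \<Longrightarrow> e \<in> M \<Longrightarrow> e \<subseteq> S"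
  unfolding matching_def by blast

lemma matching_edge_nonempty: "matching S M \<Longrightarrow> e \<in> M \<Longrightarrow> e \<noteq> {}"
  unfolding matching_def by force

lemma matching_unique_edge:
  "matching S M \<Longrightarrow> x \<in> S \<Longrightarrow> e \<in> M \<Longrightarrow> e' \<in> M \<Longrightarrow> x \<in> e \<Longrightarrow> x \<in> e' \<Longrightarrow> e = e'"
  unfolding matching_def by blast

lemma matching_partner:
  assumes "matching S M" "x \<in> S"
  obtains y where "{x, y} \<in> M" "x \<noteq> y"
proof -
  obtain e where e: "e \<in> M" "x \<in> e" using assms unfolding matching_def by blast
  then have "card e = 2" using assms unfolding matching_def by blast
  then obtain a b where "e = {a, b}" "a \<noteq> b" by (auto simp: card_2_iff)
  with e have "e = {x, if x = a then b else a}" "x \<noteq> (if x = a then b else a)" by auto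
  with e show thesis using that by metis
qed

lemma matching_Un:
  assumes E: "matching U E" and M: "matching V M" and disj: "U \<inter> V = {}"
  shows "matching (U \<union> V) (E \<union> M)"
  unfolding matching_def
proof (intro conjI ballI)
  fix e assume "e \<in> E \<union> M"
  then show "card e = 2" "e \<subseteq> U \<union> V" using E M unfolding matching_def by auto
next
  fix x assume "x \<in> U \<union> V"
  then show "\<exists>!e. e \<in> E \<union> M \<and> x \<in> e"
  proof
    assume "x \<in> U"
    then have "x \<notin> e" if "e \<in> M" for e using M that disj matching_edge_subset by blast
    then show ?thesis using E \<open>x \<in> U\<close> unfolding matching_def by blast
  next
    assume "x \<in> V"
    then have "x \<notin> e" if "e \<in> E" for e using E that disj matching_edge_subset by blast
    then show ?thesis using M \<open>x \<in> V\<close> unfolding matching_def by blast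
  qed
qed

lemma matching_Diff:
  assumes M: "matching S M" and E: "matching U E" and EM: "E \<subseteq> M"
  shows "matching (S - U) (M - E)"
  unfolding matching_def
proof (intro conjI ballI)
  fix e assume e: "e \<in> M - E"
  have "x \<notin> U" if "x \<in> e" for x
  proof
    assume "x \<in> U"
    then obtain e' where "e' \<in> E" "x \<in> e'" using E unfolding matching_def by blast
    then have "e' = e"
      using matching_unique_edge[OF M] EM e \<open>x \<in> e\<close> matching_edge_subset[OF M] by blast
    then show False using \<open>e' \<in> E\<close> e by blast
  qed
  then show "card e = 2" "e \<subseteq> S - U" using e M unfolding matching_def by auto
next
  fix x assume x: "x \<in> S - U"
  then obtain e where "e \<in> M" "x \<in> e" "\<forall>e'\<in>M. x \<in> e' \<longrightarrow> e' = e"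
    using M unfolding matching_def by (metis Diff_iff)
  moreover have "e \<notin> E" using matching_edge_subset[OF E] x \<open>x \<in> e\<close> by blast
  ultimately show "\<exists>!e. e \<in> M - E \<and> x \<in> e" by blast
qed

definition invol :: "'v set \<Rightarrow> ('v \<Rightarrow> 'v) \<Rightarrow> bool" where
  "invol S \<sigma> \<longleftrightarrow> (\<forall>z\<in>S. \<sigma> z \<in> S \<and> \<sigma> z \<noteq> z \<and> \<sigma> (\<sigma> z) = z)"

definition stable_matchings :: "'v set \<Rightarrow> ('v \<Rightarrow> 'v) \<Rightarrow> 'v set set set" where
  "stable_matchings S \<sigma> = {M. matching S M \<and> (\<forall>e\<in>M. \<sigma> ` e \<in> M)}"

lemma finite_stable_matchings: "finite S \<Longrightarrow> finite (stable_matchings S \<sigma>)"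
  by (rule finite_subset[of _ "Pow (Pow S)"]) (auto simp: stable_matchings_def matching_def)

lemma invol_Diff: "invol S \<sigma> \<Longrightarrow> \<sigma> ` U \<subseteq> U \<Longrightarrow> invol (S - U) \<sigma>"
  unfolding invol_def by (metis Diff_iff image_subset_iff)

lemma card_stable_matchings_containing:
  assumes inv: "invol S \<sigma>" and E: "matching U E" and US: "U \<subseteq> S"
    and E_stable: "\<forall>e\<in>E. \<sigma> ` e \<in> E" and U_stable: "\<sigma> ` U \<subseteq> U"
  shows "card {M \<in> stable_matchings S \<sigma>. E \<subseteq> M} = card (stable_matchings (S - U) \<sigma>)"
proof -
  have disj: "M' \<inter> E = {}" if "matching (S - U) M'" for M'
    using matching_edge_subset[OF that] matching_edge_nonempty[OF that] matching_edge_subset[OF E]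
    by blast
  have leaves_U: "\<sigma> ` e \<notin> E" if M': "matching (S - U) M'" and e: "e \<in> M'" for M' e
  proof
    assume "\<sigma> ` e \<in> E"
    obtain z where z: "z \<in> e" using matching_edge_nonempty[OF M' e] by blast
    then have "\<sigma> z \<in> U" using \<open>\<sigma> ` e \<in> E\<close> matching_edge_subset[OF E] by blast
    then have "\<sigma> (\<sigma> z) \<in> U" using U_stable by blast
    moreover have "z \<in> S - U" using z matching_edge_subset[OF M' e] by blast
    ultimately show False using inv unfolding invol_def by auto
  qed
  have "bij_betw (\<lambda>M. M - E) {M \<in> stable_matchings S \<sigma>. E \<subseteq> M} (stable_matchings (S - U) \<sigma>)"
  proof (rule bij_betw_byWitness[where f' = "\<lambda>M'. M' \<union> E"])
    show "\<forall>M\<in>{M \<in> stable_matchings S \<sigma>. E \<subseteq> M}. M - E \<union> E = M" by blast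
    show "\<forall>M'\<in>stable_matchings (S - U) \<sigma>. M' \<union> E - E = M'"
      using disj unfolding stable_matchings_def by blast
    show "(\<lambda>M. M - E) ` {M \<in> stable_matchings S \<sigma>. E \<subseteq> M} \<subseteq> stable_matchings (S - U) \<sigma>"
    proof (rule image_subsetI)
      fix M assume "M \<in> {M \<in> stable_matchings S \<sigma>. E \<subseteq> M}"
      then have M: "M \<in> stable_matchings S \<sigma>" "E \<subseteq> M" by auto
      then have "matching (S - U) (M - E)"
        using matching_Diff[OF _ E] unfolding stable_matchings_def by blast
      moreover have "\<sigma> ` e \<in> M - E" if "e \<in> M - E" for e
        using M leaves_U[OF \<open>matching (S - U) (M - E)\<close> that] that
        unfolding stable_matchings_def by blast
      ultimately show "M - E \<in> stable_matchings (S - U) \<sigma>" unfolding stable_matchings_def by blast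
    qed
    show "(\<lambda>M'. M' \<union> E) ` stable_matchings (S - U) \<sigma> \<subseteq> {M \<in> stable_matchings S \<sigma>. E \<subseteq> M}"
    proof (rule image_subsetI)
      fix M' assume M': "M' \<in> stable_matchings (S - U) \<sigma>"
      have "matching (U \<union> (S - U)) (E \<union> M')"
        using M' E by (intro matching_Un) (auto simp: stable_matchings_def)
      moreover have "U \<union> (S - U) = S" using US by blast
      ultimately show "M' \<union> E \<in> {M \<in> stable_matchings S \<sigma>. E \<subseteq> M}"
        using M' E_stable unfolding stable_matchings_def by (auto simp: Un_commute)
    qed
  qed
  then show ?thesis by (rule bij_betw_same_card)
qed

lemma card_stable_matchings_by_partner:
  assumes fin: "finite S" and x: "x \<in> S"
  shows "card (stable_matchings S \<sigma>) = (\<Sum>y\<in>S - {x}. card {M \<in> stable_matchings S \<sigma>. {x, y} \<in> M})"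
proof -
  let ?P = "\<lambda>y. {M \<in> stable_matchings S \<sigma>. {x, y} \<in> M}"
  have "stable_matchings S \<sigma> = (\<Union>y\<in>S - {x}. ?P y)"
  proof (intro equalityI subsetI)
    fix M assume M: "M \<in> stable_matchings S \<sigma>"
    then have m: "matching S M" by (simp add: stable_matchings_def)
    obtain y where "{x, y} \<in> M" "x \<noteq> y" using matching_partner[OF m x] .
    moreover have "y \<in> S" using matching_edge_subset[OF m \<open>{x, y} \<in> M\<close>] by simp
    ultimately show "M \<in> (\<Union>y\<in>S - {x}. ?P y)" using M by blast
  qed blast
  moreover have "?P y \<inter> ?P y' = {}" if "y \<in> S - {x}" "y' \<in> S - {x}" "y \<noteq> y'" for y y'
  proof -
    have "{x, y} \<noteq> {x, y'}" using that by (auto simp: doubleton_eq_iff)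
    then show ?thesis
      using matching_unique_edge[OF _ x] that unfolding stable_matchings_def by blast
  qed
  moreover have "finite (?P y)" for y using finite_stable_matchings[OF fin] by simp
  ultimately show ?thesis using fin by (subst card_UN_disjoint[symmetric]) auto
qed

lemma card_stable_matchings_partner_self:
  assumes inv: "invol S \<sigma>" and x: "x \<in> S"
  shows "card {M \<in> stable_matchings S \<sigma>. {x, \<sigma> x} \<in> M} = card (stable_matchings (S - {x, \<sigma> x}) \<sigma>)"
proof -
  have sx: "\<sigma> x \<in> S" "\<sigma> x \<noteq> x" "\<sigma> (\<sigma> x) = x" using inv x unfolding invol_def by auto
  have "matching {x, \<sigma> x} {{x, \<sigma> x}}" using sx by (auto simp: matching_def)
  from card_stable_matchings_containing[OF inv this] x sx show ?thesis by (simp add: insert_commute)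
qed

text \<open>Otherwise the edge of x forces the reflected edge, and both can be removed.\<close>
lemma card_stable_matchings_partner_other:
  assumes inv: "invol S \<sigma>" and x: "x \<in> S" and y: "y \<in> S - {x, \<sigma> x}"
  shows "card {M \<in> stable_matchings S \<sigma>. {x, y} \<in> M}
       = card (stable_matchings (S - {x, \<sigma> x, y, \<sigma> y}) \<sigma>)"
proof -
  have sx: "\<sigma> x \<in> S" "\<sigma> x \<noteq> x" "\<sigma> (\<sigma> x) = x" using inv x unfolding invol_def by auto
  have sy: "\<sigma> y \<in> S" "\<sigma> y \<noteq> y" "\<sigma> (\<sigma> y) = y" using inv y unfolding invol_def by auto
  have "\<sigma> y \<noteq> x" "\<sigma> y \<noteq> \<sigma> x" using sx(3) sy(3) y by (metis DiffE insertCI)+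
  then have "matching {x, \<sigma> x, y, \<sigma> y} {{x, y}, {\<sigma> x, \<sigma> y}}"
    using sx sy y by (auto simp: matching_def)
  from card_stable_matchings_containing[OF inv this] have
    "card {M \<in> stable_matchings S \<sigma>. {{x, y}, {\<sigma> x, \<sigma> y}} \<subseteq> M}
       = card (stable_matchings (S - {x, \<sigma> x, y, \<sigma> y}) \<sigma>)"
    using x y sx sy by (auto simp: insert_commute)
  moreover have "{M \<in> stable_matchings S \<sigma>. {{x, y}, {\<sigma> x, \<sigma> y}} \<subseteq> M}
      = {M \<in> stable_matchings S \<sigma>. {x, y} \<in> M}"
    unfolding stable_matchings_def by force
  ultimately show ?thesis by simp
qed

theorem card_stable_matchings:
  "finite S \<Longrightarrow> invol S \<sigma> \<Longrightarrow> card S = 2 * m \<Longrightarrow> card (stable_matchings S \<sigma>) = a_seq m"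
proof (induction m arbitrary: S rule: less_induct)
  case (less m)
  show ?case
  proof (cases m)
    case 0
    then have "stable_matchings S \<sigma> = {{}}"
      using less.prems by (auto simp: stable_matchings_def matching_def)
    then show ?thesis using 0 by simp
  next
    case (Suc k)
    note fin = less.prems(1) and inv = less.prems(2)
    obtain x where x: "x \<in> S" using less.prems Suc by fastforce
    have sx: "\<sigma> x \<in> S" "\<sigma> x \<noteq> x" using inv x unfolding invol_def by auto
    define S' where "S' = S - {x, \<sigma> x}"
    have card_S': "card S' = 2 * k" using less.prems Suc x sx by (simp add: S'_def)
    have inv_S': "invol S' \<sigma>" unfolding S'_def using inv x sx
      by (intro invol_Diff) (auto simp: invol_def)
    have self: "card {M \<in> stable_matchings S \<sigma>. {x, \<sigma> x} \<in> M} = a_seq k"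
      using card_stable_matchings_partner_self[OF inv x] less.IH[of k S'] fin inv_S' card_S' Suc
      by (simp add: S'_def)
    have other: "card {M \<in> stable_matchings S \<sigma>. {x, y} \<in> M} = a_seq (k - 1)" if y: "y \<in> S'" for y
    proof -
      have "y \<in> S" "\<sigma> y \<in> S'" "\<sigma> (\<sigma> y) = y"
        using inv y x sx unfolding S'_def invol_def by (auto, metis+)
      then have "card (S' - {y, \<sigma> y}) = 2 * (k - 1)"
        using card_S' inv_S' y by (auto simp: invol_def card_Diff_subset)
      moreover have "invol (S' - {y, \<sigma> y}) \<sigma>"
        using inv_S' \<open>\<sigma> (\<sigma> y) = y\<close> by (intro invol_Diff) auto
      ultimately have "card (stable_matchings (S' - {y, \<sigma> y}) \<sigma>) = a_seq (k - 1)"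
        using less.IH[of "k - 1"] fin Suc by (simp add: S'_def)
      moreover have "S' - {y, \<sigma> y} = S - {x, \<sigma> x, y, \<sigma> y}" by (auto simp: S'_def)
      ultimately show ?thesis
        using card_stable_matchings_partner_other[OF inv x] y by (simp add: S'_def)
    qed
    have "S - {x} = insert (\<sigma> x) S'" using sx by (auto simp: S'_def)
    then have "card (stable_matchings S \<sigma>) = a_seq k + (\<Sum>y\<in>S'. a_seq (k - 1))"
      using card_stable_matchings_by_partner[OF fin x] self other fin by (simp add: S'_def)
    also have "\<dots> = a_seq m" using card_S' Suc by (cases k) simp_all
    finally show ?thesis .
  qed
qed

lemma reflect_dots: "z \<in> dots N \<Longrightarrow> reflect N z \<in> dots N \<and> reflect N (reflect N z) = z"
  by (cases z) (auto simp: dots_def reflect_def)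

lemma invol_reflect:
  assumes "even N" shows "invol (dots N) (reflect N)"
proof -
  have "reflect N z \<noteq> z" if "z \<in> dots N" for z
  proof
    assume "reflect N z = z"
    then have "N + 1 - fst z = fst z" "fst z \<le> N" using that by (auto simp: reflect_def dots_def prod_eq_iff)
    then show False using assms by presburger
  qed
  then show ?thesis unfolding invol_def using reflect_dots by blast
qed

lemma sym_diagrams_stable: "sym_diagrams N = stable_matchings (dots N) (reflect N)"
proof -
  have "symmetric_diagram N M \<longleftrightarrow> (\<forall>e\<in>M. reflect N ` e \<in> M)" if "matching (dots N) M" for M
  proof
    assume cl: "\<forall>e\<in>M. reflect N ` e \<in> M"
    have "reflect N ` reflect N ` e = e" if "e \<in> M" for e
      using reflect_dots matching_edge_subset[OF \<open>matching (dots N) M\<close> that]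
      by (force simp: image_image)
    then have "M \<subseteq> (\<lambda>e. reflect N ` e) ` M" using cl by (metis image_eqI subsetI)
    then show "symmetric_diagram N M" using cl unfolding symmetric_diagram_def by blast
  qed (auto simp: symmetric_diagram_def)
  then show ?thesis
    by (auto simp: sym_diagrams_def stable_matchings_def brauer_diagrams_matching)
qed

lemma card_sym_diagrams: "even N \<Longrightarrow> card (sym_diagrams N) = a_seq N"
  using card_stable_matchings[of "dots N" "reflect N" N] invol_reflect
  by (simp add: sym_diagrams_stable dots_def card_cartesian_product)

text \<open>For two such relations A and B, an endpoint is a vertex having a partner in exactly
  one of them, i.e. a vertex of degree one in the graph A \<union> B.\<close>
definition match_rel :: "('v \<times> 'v) set \<Rightarrow> bool" where
  "match_rel A \<longleftrightarrow> sym A \<and> (\<forall>x. (x, x) \<notin> A) \<and> (\<forall>x y z. (x, y) \<in> A \<longrightarrow> (x, z) \<in> A \<longrightarrow> y = z)"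

definition endpoint :: "('v \<times> 'v) set \<Rightarrow> ('v \<times> 'v) set \<Rightarrow> 'v \<Rightarrow> bool" where
  "endpoint A B z \<longleftrightarrow> (z \<in> Domain A) \<noteq> (z \<in> Domain B)"

text \<open>The walk starting at an endpoint u with an A-partner that alternately follows A and B edges.\<close>
locale alternating_walk =
  fixes A B :: "('v \<times> 'v) set" and u :: 'v
  assumes match_A: "match_rel A" and match_B: "match_rel B"
    and finite_A: "finite A" and finite_B: "finite B"
    and start_A: "u \<in> Domain A" and start_B: "u \<notin> Domain B"
begin

definition R :: "nat \<Rightarrow> ('v \<times> 'v) set" where
  "R i = (if even i then A else B)"

text \<open>The i-th vertex of the walk; the step function is only meaningful while the walk can continue.\<close>
fun w :: "nat \<Rightarrow> 'v" where
  "w 0 = u"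
| "w (Suc i) = (THE y. (w i, y) \<in> R i)"

declare w.simps(2) [simp del]

definition valid :: "nat \<Rightarrow> bool" where
  "valid k \<longleftrightarrow> (\<forall>i<k. (w i, w (Suc i)) \<in> R i)"

lemma R_sym: "(x, y) \<in> R i \<Longrightarrow> (y, x) \<in> R i"
  using match_A match_B unfolding R_def match_rel_def sym_def by auto

lemma R_irrefl: "(x, x) \<notin> R i"
  using match_A match_B unfolding R_def match_rel_def by auto

lemma R_unique: "(x, y) \<in> R i \<Longrightarrow> (x, z) \<in> R i \<Longrightarrow> y = z"
  using match_A match_B unfolding R_def match_rel_def by (auto split: if_splits)

lemma R_parity: "even i = even j \<Longrightarrow> R i = R j"
  by (simp add: R_def)

lemma w_Suc: "(w i, y) \<in> R i \<Longrightarrow> w (Suc i) = y"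
  unfolding w.simps(2) by (auto intro: the_equality R_unique)

lemma valid_step: "valid k \<Longrightarrow> i < k \<Longrightarrow> (w i, w (Suc i)) \<in> R i"
  unfolding valid_def by blast

lemma valid_back: "valid k \<Longrightarrow> i < k \<Longrightarrow> (w (Suc i), w i) \<in> R i"
  using valid_step R_sym by blast

lemma valid_iff: "valid k \<longleftrightarrow> (\<forall>i<k. w i \<in> Domain (R i))"
  unfolding valid_def using w_Suc by blast

text \<open>A valid walk visits pairwise distinct vertices: every vertex has at most one
  partner of each colour, and the start vertex has no partner of colour B.\<close>
lemma w_inj:
  assumes ok: "valid k"
  shows "i < j \<Longrightarrow> j \<le> k \<Longrightarrow> w i \<noteq> w j"
proof (induction j arbitrary: i rule: less_induct)
  case (less j)
  obtain j' where j: "j = Suc j'" using less.prems by (cases j) auto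
  have bwd: "(w j, w j') \<in> R j'" using valid_back[OF ok] less.prems j by simp
  show "w i \<noteq> w j"
  proof
    assume eq: "w i = w j"
    show False
    proof (cases i)
      case 0
      \<comment> \<open>returning to u needs an A-edge, which can only be the first edge again\<close>
      have "even j'" using bwd eq 0 start_B by (auto simp: R_def split: if_splits)
      moreover have "(u, w 1) \<in> R j'"
        using valid_step[OF ok, of 0] less.prems \<open>even j'\<close> by (simp add: R_def)
      ultimately have "w j' = w 1" using bwd eq 0 R_unique by auto
      moreover have "j' \<noteq> 0"
      proof
        assume "j' = 0"
        then show False using bwd eq 0 j R_irrefl by simp
      qed
      with \<open>even j'\<close> have "1 < j'" by presburger
      ultimately show False using less.IH[of j' 1] j less.prems by auto
    next
      case (Suc i')
      \<comment> \<open>w i already uses its partners of both colours for the steps i' and i\<close>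
      have prev: "(w i, w i') \<in> R i'" using valid_back[OF ok, of i'] Suc less.prems by simp
      have fwd: "(w i, w (Suc i)) \<in> R i" using valid_step[OF ok, of i] less.prems by simp
      consider "even j' = even i'" | "even j' = even i" using Suc by auto
      then show False
      proof cases
        case 1
        then have "w j' = w i'" using bwd prev eq R_parity R_unique by metis
        then show False using less.IH[of j' i'] j less.prems Suc by auto
      next
        case 2
        then have "w j' = w (Suc i)" using bwd fwd eq R_parity R_unique by metis
        moreover have "j' \<noteq> i" using fwd eq j R_irrefl by auto
        moreover have "j' \<noteq> Suc i" using 2 by auto
        ultimately show False using less.IH[of j' "Suc i"] j less.prems by auto
      qed
    qed
  qed
qed

lemma valid_bound:
  assumes ok: "valid k" shows "k \<le> card (Range A \<union> Range B)"
proof -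
  have "w ` {1..k} \<subseteq> Range A \<union> Range B"
  proof
    fix z assume "z \<in> w ` {1..k}"
    then obtain i where "i < k" "z = w (Suc i)" by (auto simp: atLeastAtMost_iff Suc_le_eq gr0_conv_Suc)
    then show "z \<in> Range A \<union> Range B"
      using valid_step[OF ok, of i] by (auto simp: R_def split: if_splits)
  qed
  moreover have "inj_on w {1..k}"
    by (rule inj_onI) (metis atLeastAtMost_iff linorder_neqE_nat w_inj[OF ok])
  ultimately show ?thesis
    using card_mono[of "Range A \<union> Range B" "w ` {1..k}"] card_image[of w "{1..k}"] finite_A finite_B
    by (simp add: finite_Range)
qed

definition len :: nat where
  "len = (LEAST k. w k \<notin> Domain (R k))"

lemma walk_stops: "w len \<notin> Domain (R len)"
proof -
  have "\<exists>k. w k \<notin> Domain (R k)"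
    using valid_bound[of "Suc (card (Range A \<union> Range B))"] valid_iff by auto
  then show ?thesis unfolding len_def by (rule LeastI_ex)
qed

lemma valid_len: "valid len"
  unfolding valid_iff len_def using not_less_Least by blast

lemma len_pos: "0 < len"
  using walk_stops start_A by (cases len) (auto simp: R_def)

lemma walk_reachable: "k \<le> len \<Longrightarrow> (u, w k) \<in> (A \<union> B)\<^sup>*"
proof (induction k)
  case (Suc k)
  then have "(w k, w (Suc k)) \<in> A \<union> B"
    using valid_step[OF valid_len, of k] by (auto simp: R_def split: if_splits)
  with Suc show ?case by (meson Suc_leD rtrancl.rtrancl_into_rtrancl)
qed simp

lemma reachable_on_walk: "(u, z) \<in> (A \<union> B)\<^sup>* \<Longrightarrow> \<exists>k\<le>len. z = w k"
proof (induction rule: rtrancl_induct)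
  case base then show ?case by (intro exI[of _ 0]) simp
next
  case (step y z)
  then obtain k where k: "k \<le> len" "y = w k" by blast
  have "(w k, z) \<in> R k \<or> (w k, z) \<in> R (Suc k)" using step(2) k by (auto simp: R_def)
  then show ?case
  proof
    assume "(w k, z) \<in> R k"
    moreover from this have "k \<noteq> len" using walk_stops by blast
    ultimately show ?thesis using w_Suc k by (intro exI[of _ "Suc k"]) auto
  next
    assume prev_colour: "(w k, z) \<in> R (Suc k)"
    obtain k' where k': "k = Suc k'" using prev_colour start_B by (cases k) (auto simp: R_def)
    then have "(w k, w k') \<in> R (Suc k)" using valid_back[OF valid_len, of k'] k by (simp add: R_def)
    then have "z = w k'" using prev_colour R_unique by blast
    then show ?thesis using k k' by (intro exI[of _ k']) simp
  qed
qed

lemma interior_not_endpoint: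
  assumes "0 < k" "k < len" shows "\<not> endpoint A B (w k)"
proof -
  obtain k' where k': "k = Suc k'" using assms by (cases k) auto
  have "w k \<in> Domain (R k)" "w k \<in> Domain (R k')"
    using valid_step[OF valid_len, of k] valid_back[OF valid_len, of k'] assms k' by auto
  then show ?thesis using k' by (auto simp: endpoint_def R_def split: if_splits)
qed

lemma last_endpoint: "endpoint A B (w len)"
proof -
  obtain k' where k': "len = Suc k'" using len_pos by (cases len) auto
  have "w len \<in> Domain (R k')" using valid_back[OF valid_len, of k'] k' by auto
  then show ?thesis using walk_stops k' by (auto simp: endpoint_def R_def split: if_splits)
qed

lemma reachable_endpoints: "{z. (u, z) \<in> (A \<union> B)\<^sup>* \<and> endpoint A B z} = {u, w len}"
proof -
  have "endpoint A B u" using start_A start_B by (simp add: endpoint_def)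
  moreover have "z = u \<or> z = w len" if "(u, z) \<in> (A \<union> B)\<^sup>*" "endpoint A B z" for z
    using reachable_on_walk[OF that(1)] interior_not_endpoint that(2)
    by (metis le_neq_implies_less not_gr_zero w.simps(1))
  ultimately show ?thesis using walk_reachable last_endpoint by auto
qed

end

text \<open>In the union of two matchings (a graph of maximal degree two), the component of a vertex
  of degree one is a path, so it contains exactly one other vertex of degree one.\<close>
theorem alternating_path_endpoints:
  assumes "match_rel A" "match_rel B" "finite A" "finite B" "endpoint A B u"
  shows "\<exists>v. v \<noteq> u \<and> {z. (u, z) \<in> (A \<union> B)\<^sup>* \<and> endpoint A B z} = {u, v}"
proof -
  have walk_from: "\<exists>v. v \<noteq> u \<and> {z. (u, z) \<in> (A' \<union> B')\<^sup>* \<and> endpoint A' B' z} = {u, v}"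
    if "alternating_walk A' B' u" for A' B'
  proof -
    interpret alternating_walk A' B' u by (fact that)
    have "w len \<noteq> u" using w_inj[OF valid_len, of 0 len] len_pos by simp
    then show ?thesis using reachable_endpoints by blast
  qed
  show ?thesis
  proof (cases "u \<in> Domain A")
    case True
    then show ?thesis using assms by (intro walk_from) (unfold_locales, auto simp: endpoint_def)
  next
    case False
    then have "alternating_walk B A u" using assms by unfold_locales (auto simp: endpoint_def)
    then show ?thesis using walk_from[of B A] by (simp add: endpoint_def Un_commute eq_commute)
  qed
qed

definition erel :: "('a \<Rightarrow> 'w) \<Rightarrow> 'a set set \<Rightarrow> ('w \<times> 'w) set" where
  "erel f d = {(f x, f y) | x y. {x, y} \<in> d \<and> x \<noteq> y}"

lemma stack_edges_erel: "stack_edges d1 d2 = erel up1 d1 \<union> erel up2 d2"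
  by (simp add: stack_edges_def erel_def)

lemma match_rel_erel:
  assumes m: "matching S d" and inj: "inj f"
  shows "match_rel (erel f d)"
  unfolding match_rel_def
proof (intro conjI allI impI)
  show "sym (erel f d)"
  proof (rule symI)
    fix a b assume "(a, b) \<in> erel f d"
    then obtain x y where "a = f x" "b = f y" "{y, x} \<in> d" "y \<noteq> x"
      unfolding erel_def by (auto simp: insert_commute)
    then show "(b, a) \<in> erel f d" unfolding erel_def by blast
  qed
  show "(z, z) \<notin> erel f d" for z unfolding erel_def using inj by (auto dest: injD)
next
  fix a b c assume "(a, b) \<in> erel f d" "(a, c) \<in> erel f d"
  then obtain x y x' z where xy: "a = f x" "b = f y" "{x, y} \<in> d" "x \<noteq> y"
    and xz: "a = f x'" "c = f z" "{x', z} \<in> d" "x' \<noteq> z" unfolding erel_def by blast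
  have "x' = x" using xy xz inj by (auto dest: injD)
  moreover have "x \<in> S" using matching_edge_subset[OF m xy(3)] by simp
  ultimately have "{x, y} = {x, z}" using matching_unique_edge[OF m] xy(3) xz(3) by blast
  then show "b = c" using xy xz \<open>x' = x\<close> by (auto simp: doubleton_eq_iff)
qed

lemma finite_erel: "matching S d \<Longrightarrow> finite S \<Longrightarrow> finite (erel f d)"
  by (rule finite_subset[of _ "f ` S \<times> f ` S"]) (auto simp: erel_def dest: matching_edge_subset)

lemma Domain_erel:
  assumes m: "matching S d" shows "Domain (erel f d) = f ` S"
proof (intro equalityI subsetI)
  fix a assume "a \<in> Domain (erel f d)"
  then show "a \<in> f ` S" unfolding erel_def using matching_edge_subset[OF m] by blast
next
  fix a assume "a \<in> f ` S"
  then obtain x where "x \<in> S" "a = f x" by blast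
  moreover obtain y where "{x, y} \<in> d" "x \<noteq> y" using matching_partner[OF m \<open>x \<in> S\<close>] .
  ultimately show "a \<in> Domain (erel f d)" unfolding erel_def by blast
qed

lemma image_up1: "up1 ` dots N = {1..N} \<times> {1, 2::nat}"
proof (intro equalityI subsetI)
  fix v assume "v \<in> {1..N} \<times> {1, 2::nat}"
  then obtain j k where "v = (j, k)" "j \<in> {1..N}" "k = 1 \<or> k = 2" by auto
  then show "v \<in> up1 ` dots N" by (intro rev_image_eqI[of "(j, k = 2)"]) (auto simp: up1_def dots_def)
qed (auto simp: up1_def dots_def split: if_splits)

lemma image_up2: "up2 ` dots N = {1..N} \<times> {0, 1::nat}"
proof (intro equalityI subsetI)
  fix v assume "v \<in> {1..N} \<times> {0, 1::nat}"
  then obtain j k where "v = (j, k)" "j \<in> {1..N}" "k = 0 \<or> k = 1" by auto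
  then show "v \<in> up2 ` dots N" by (intro rev_image_eqI[of "(j, k = 1)"]) (auto simp: up2_def dots_def)
qed (auto simp: up2_def dots_def split: if_splits)

lemma image_outer: "outer ` dots N = {1..N} \<times> {0, 2::nat}"
proof (intro equalityI subsetI)
  fix v assume "v \<in> {1..N} \<times> {0, 2::nat}"
  then obtain j k where "v = (j, k)" "j \<in> {1..N}" "k = 0 \<or> k = 2" by auto
  then show "v \<in> outer ` dots N" by (intro rev_image_eqI[of "(j, k = 2)"]) (auto simp: outer_def dots_def)
qed (auto simp: outer_def dots_def split: if_splits)

lemma inj_up1: "inj up1" by (rule injI) (auto simp: up1_def prod_eq_iff split: if_splits)
lemma inj_up2: "inj up2" by (rule injI) (auto simp: up2_def prod_eq_iff split: if_splits)
lemma inj_outer: "inj outer" by (rule injI) (auto simp: outer_def prod_eq_iff split: if_splits)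

lemma finite_dots: "finite (dots N)"
  by (simp add: dots_def)

lemma endpoint_stack:
  assumes "matching (dots N) d1" "matching (dots N) d2"
  shows "endpoint (erel up1 d1) (erel up2 d2) v \<longleftrightarrow> v \<in> outer ` dots N"
  using assms by (auto simp: endpoint_def Domain_erel image_up1 image_up2 image_outer)

lemma stack_conn_alt: "stack_conn d1 d2 = (erel up1 d1 \<union> erel up2 d2)\<^sup>*"
  by (simp add: stack_conn_def stack_edges_erel)

lemma concat_partner:
  assumes d1: "d1 \<in> brauer_diagrams N" and d2: "d2 \<in> brauer_diagrams N" and x: "x \<in> dots N"
  obtains y where "y \<noteq> x" "{z \<in> dots N. (outer x, outer z) \<in> stack_conn d1 d2} = {x, y}"
proof -
  have m1: "matching (dots N) d1" and m2: "matching (dots N) d2"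
    using d1 d2 by (auto simp: brauer_diagrams_matching)
  let ?A = "erel up1 d1" and ?B = "erel up2 d2"
  have "endpoint ?A ?B (outer x)" using x endpoint_stack[OF m1 m2] by blast
  then obtain v where v: "v \<noteq> outer x"
    and ends: "{z. (outer x, z) \<in> (?A \<union> ?B)\<^sup>* \<and> endpoint ?A ?B z} = {outer x, v}"
    using alternating_path_endpoints[of ?A ?B] match_rel_erel[OF m1 inj_up1] match_rel_erel[OF m2 inj_up2]
      finite_erel[OF m1 finite_dots] finite_erel[OF m2 finite_dots] by blast
  then obtain y where y: "y \<in> dots N" "v = outer y" using endpoint_stack[OF m1 m2] by blast
  have "{z \<in> dots N. (outer x, outer z) \<in> stack_conn d1 d2} = {z \<in> dots N. outer z \<in> {outer x, v}}"
    using ends endpoint_stack[OF m1 m2] by (auto simp: stack_conn_alt)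
  also have "\<dots> = {x, y}" using x y inj_outer by (auto dest: injD)
  finally show ?thesis using v y by (intro that) auto
qed

lemma stack_conn_sym:
  assumes "matching S d1" "matching S d2" "(a, b) \<in> stack_conn d1 d2"
  shows "(b, a) \<in> stack_conn d1 d2"
proof -
  have "sym (erel up1 d1 \<union> erel up2 d2)"
    using match_rel_erel[OF assms(1) inj_up1] match_rel_erel[OF assms(2) inj_up2]
    unfolding match_rel_def by (auto intro: sym_Un)
  then have "sym (stack_conn d1 d2)" unfolding stack_conn_alt by (rule sym_rtrancl)
  then show ?thesis using assms(3) unfolding sym_def by blast
qed

theorem concat_brauer:
  assumes d1: "d1 \<in> brauer_diagrams N" and d2: "d2 \<in> brauer_diagrams N"
  shows "concat N d1 d2 \<in> brauer_diagrams N"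
  unfolding brauer_diagrams_matching mem_Collect_eq matching_def
proof (intro conjI ballI)
  fix e assume "e \<in> concat N d1 d2"
  then obtain x y where "e = {x, y}" "x \<in> dots N" "y \<in> dots N" "x \<noteq> y" unfolding concat_def by blast
  then show "card e = 2" "e \<subseteq> dots N" by auto
next
  fix z assume z: "z \<in> dots N"
  obtain y where y: "y \<noteq> z" and partners: "{z' \<in> dots N. (outer z, outer z') \<in> stack_conn d1 d2} = {z, y}"
    using concat_partner[OF d1 d2 z] .
  have conn_z: "(outer z, outer z') \<in> stack_conn d1 d2 \<longleftrightarrow> z' = z \<or> z' = y" if "z' \<in> dots N" for z'
    using partners that by blast
  have "y \<in> dots N" using partners by blast
  have sym_conn: "(outer a, outer z) \<in> stack_conn d1 d2 \<Longrightarrow> (outer z, outer a) \<in> stack_conn d1 d2" for a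
    using stack_conn_sym d1 d2 by (auto simp: brauer_diagrams_matching)
  show "\<exists>!e. e \<in> concat N d1 d2 \<and> z \<in> e"
  proof (rule ex1I[of _ "{z, y}"])
    show "{z, y} \<in> concat N d1 d2 \<and> z \<in> {z, y}"
      using y z \<open>y \<in> dots N\<close> conn_z unfolding concat_def by blast
  next
    fix e assume "e \<in> concat N d1 d2 \<and> z \<in> e"
    then obtain a b where e: "e = {a, b}" "a \<in> dots N" "b \<in> dots N" "a \<noteq> b"
      "(outer a, outer b) \<in> stack_conn d1 d2" "z \<in> e" unfolding concat_def by blast
    show "e = {z, y}"
    proof (cases "z = a")
      case True
      then show ?thesis using e conn_z by auto
    next
      case False
      then have "z = b" using e by blast
      then show ?thesis using e conn_z[of a] sym_conn[of a] False by auto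
    qed
  qed
qed

lemma rtrancl_map_closed:
  assumes "\<And>a b. (a, b) \<in> r \<Longrightarrow> (g a, g b) \<in> r" and "(a, b) \<in> r\<^sup>*"
  shows "(g a, g b) \<in> r\<^sup>*"
  using assms(2) by induction (auto intro: rtrancl_into_rtrancl assms(1))

definition reflect_vertex :: "nat \<Rightarrow> nat \<times> nat \<Rightarrow> nat \<times> nat" where
  "reflect_vertex N v = (N + 1 - fst v, snd v)"

lemma reflect_vertex_up1: "reflect_vertex N (up1 x) = up1 (reflect N x)"
  by (simp add: reflect_vertex_def up1_def reflect_def)

lemma reflect_vertex_up2: "reflect_vertex N (up2 x) = up2 (reflect N x)"
  by (simp add: reflect_vertex_def up2_def reflect_def)

lemma reflect_vertex_outer: "reflect_vertex N (outer x) = outer (reflect N x)"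
  by (simp add: reflect_vertex_def outer_def reflect_def)

lemma erel_reflect:
  assumes d: "d \<in> sym_diagrams N" and f: "\<And>x. reflect_vertex N (f x) = f (reflect N x)"
    and ab: "(a, b) \<in> erel f d"
  shows "(reflect_vertex N a, reflect_vertex N b) \<in> erel f d"
proof -
  obtain x y where xy: "a = f x" "b = f y" "{x, y} \<in> d" "x \<noteq> y" using ab unfolding erel_def by blast
  have "x \<in> dots N" "y \<in> dots N"
    using matching_edge_subset[of "dots N" d "{x, y}"] d xy(3)
    by (auto simp: sym_diagrams_def brauer_diagrams_matching)
  then have "reflect N x \<noteq> reflect N y" using xy(4) reflect_dots[of x N] reflect_dots[of y N] by metis
  moreover have "reflect N ` {x, y} \<in> (\<lambda>e. reflect N ` e) ` d" using xy(3) by (rule imageI)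
  then have "{reflect N x, reflect N y} \<in> d"
    using d unfolding sym_diagrams_def symmetric_diagram_def by simp
  ultimately have "(f (reflect N x), f (reflect N y)) \<in> erel f d" unfolding erel_def by blast
  then show ?thesis using xy f by simp
qed

lemma stack_conn_reflect:
  assumes "d1 \<in> sym_diagrams N" "d2 \<in> sym_diagrams N" "(a, b) \<in> stack_conn d1 d2"
  shows "(reflect_vertex N a, reflect_vertex N b) \<in> stack_conn d1 d2"
  using assms(3) unfolding stack_conn_alt
proof (rule rtrancl_map_closed[rotated])
  fix a b assume "(a, b) \<in> erel up1 d1 \<union> erel up2 d2"
  then show "(reflect_vertex N a, reflect_vertex N b) \<in> erel up1 d1 \<union> erel up2 d2"
    using erel_reflect[of d1 N up1] erel_reflect[of d2 N up2] assms(1,2)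
      reflect_vertex_up1 reflect_vertex_up2 by blast
qed

theorem concat_sym:
  assumes d1: "d1 \<in> sym_diagrams N" and d2: "d2 \<in> sym_diagrams N"
  shows "concat N d1 d2 \<in> sym_diagrams N"
proof -
  have "matching (dots N) (concat N d1 d2)"
    using concat_brauer d1 d2 by (simp add: sym_diagrams_def brauer_diagrams_matching)
  moreover have "reflect N ` e \<in> concat N d1 d2" if e: "e \<in> concat N d1 d2" for e
  proof -
    obtain x y where xy: "e = {x, y}" "x \<in> dots N" "y \<in> dots N" "x \<noteq> y"
      "(outer x, outer y) \<in> stack_conn d1 d2" using e unfolding concat_def by blast
    have "(outer (reflect N x), outer (reflect N y)) \<in> stack_conn d1 d2"
      using stack_conn_reflect[OF d1 d2 xy(5)] by (simp add: reflect_vertex_outer)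
    moreover have "reflect N x \<noteq> reflect N y"
      using xy(4) reflect_dots[OF xy(2)] reflect_dots[OF xy(3)] by metis
    moreover have "reflect N x \<in> dots N" "reflect N y \<in> dots N"
      using reflect_dots xy(2,3) by auto
    ultimately have "{reflect N x, reflect N y} \<in> concat N d1 d2" unfolding concat_def by blast
    then show ?thesis using xy(1) by simp
  qed
  ultimately show ?thesis by (simp add: sym_diagrams_stable stable_matchings_def)
qed

lemma id_sym: "id_diagram N \<in> sym_diagrams N"
proof -
  have "matching (dots N) (id_diagram N)"
    unfolding matching_def
  proof (intro conjI ballI)
    fix e assume "e \<in> id_diagram N"
    then obtain j where "e = {(j, True), (j, False)}" "j \<in> {1..N}" unfolding id_diagram_def by blast
    then show "card e = 2" "e \<subseteq> dots N" by (auto simp: dots_def)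
  next
    fix z assume z: "z \<in> dots N"
    obtain j b where zj: "z = (j, b)" "j \<in> {1..N}" using z by (cases z) (auto simp: dots_def)
    show "\<exists>!e. e \<in> id_diagram N \<and> z \<in> e"
    proof (rule ex1I[of _ "{(j, True), (j, False)}"])
      show "{(j, True), (j, False)} \<in> id_diagram N \<and> z \<in> {(j, True), (j, False)}"
        using zj unfolding id_diagram_def by (cases b) auto
      fix e assume "e \<in> id_diagram N \<and> z \<in> e"
      then show "e = {(j, True), (j, False)}" using zj unfolding id_diagram_def by auto
    qed
  qed
  moreover have "reflect N ` e \<in> id_diagram N" if e: "e \<in> id_diagram N" for e
  proof -
    obtain j where j: "e = {(j, True), (j, False)}" "j \<in> {1..N}" using e unfolding id_diagram_def by blast
    then have "reflect N ` e = {(N + 1 - j, True), (N + 1 - j, False)}" by (simp add: reflect_def)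
    moreover have "N + 1 - j \<in> {1..N}" using j by auto
    ultimately show ?thesis unfolding id_diagram_def by blast
  qed
  ultimately show ?thesis by (simp add: sym_diagrams_stable stable_matchings_def)
qed

interpretation diagram_module: module "br_scale :: 'a::comm_ring_1 \<Rightarrow> (diagram \<Rightarrow> 'a) \<Rightarrow> _"
  by unfold_locales (auto simp: br_scale_def fun_eq_iff algebra_simps)

lemma sum_fun_apply: "finite A \<Longrightarrow> (\<Sum>v\<in>A. f v) x = (\<Sum>v\<in>A. f v x)"
  by (induction A rule: finite_induct) auto

lemma span_basis:
  assumes fin: "finite F"
  shows "diagram_module.span (basis_elt ` F :: (diagram \<Rightarrow> 'a::comm_ring_1) set)
       = {x. \<forall>D. D \<notin> F \<longrightarrow> x D = 0}"
proof
  show "diagram_module.span (basis_elt ` F) \<subseteq> {x :: diagram \<Rightarrow> 'a. \<forall>D. D \<notin> F \<longrightarrow> x D = 0}"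
    by (rule diagram_module.span_minimal)
      (auto simp: basis_elt_def diagram_module.subspace_def br_scale_def)
next
  show "{x. \<forall>D. D \<notin> F \<longrightarrow> x D = 0} \<subseteq> diagram_module.span (basis_elt ` F :: (diagram \<Rightarrow> 'a) set)"
  proof
    fix x :: "diagram \<Rightarrow> 'a" assume x: "x \<in> {x. \<forall>D. D \<notin> F \<longrightarrow> x D = 0}"
    have "x = (\<Sum>D\<in>F. br_scale (x D) (basis_elt D))"
    proof
      fix E
      have "(\<Sum>D\<in>F. br_scale (x D) (basis_elt D)) E = (\<Sum>D\<in>F. x D * (if E = D then 1 else 0))"
        using fin by (simp add: sum_fun_apply br_scale_def basis_elt_def)
      also have "\<dots> = (\<Sum>D\<in>F. if E = D then x E else 0)" by (rule sum.cong) auto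
      also have "\<dots> = x E" using x by (cases "E \<in> F") (simp_all add: sum.delta'[OF fin])
      finally show "x E = (\<Sum>D\<in>F. br_scale (x D) (basis_elt D)) E" by simp
    qed
    also have "\<dots> \<in> diagram_module.span (basis_elt ` F)"
      by (intro diagram_module.span_sum diagram_module.span_scale diagram_module.span_base) auto
    finally show "x \<in> diagram_module.span (basis_elt ` F)" .
  qed
qed

text \<open>The basis diagrams are linearly independent: evaluating a
  vanishing combination at a diagram recovers its coefficient.\<close>
lemma basis_independent:
  "\<not> diagram_module.dependent (basis_elt ` F :: (diagram \<Rightarrow> 'a::comm_ring_1) set)"
proof
  assume "diagram_module.dependent (basis_elt ` F :: (diagram \<Rightarrow> 'a) set)"
  then obtain t c where t: "finite t" "t \<subseteq> basis_elt ` F"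
    and zero: "(\<Sum>v\<in>t. br_scale (c v) v) = (0::diagram \<Rightarrow> 'a)" and nz: "\<exists>v\<in>t. c v \<noteq> 0"
    unfolding diagram_module.dependent_explicit by blast
  obtain D where D: "basis_elt D \<in> t" "c (basis_elt D) \<noteq> 0" using nz t by auto
  have "0 = (\<Sum>v\<in>t. br_scale (c v) v) D" using zero by simp
  also have "\<dots> = (\<Sum>v\<in>t. c v * v D)" using t by (simp add: sum_fun_apply br_scale_def)
  also have "\<dots> = c (basis_elt D) * basis_elt D D + (\<Sum>v\<in>t - {basis_elt D}. c v * v D)"
    using t D by (simp add: sum.remove)
  also have "(\<Sum>v\<in>t - {basis_elt D}. c v * v D) = 0"
  proof (rule sum.neutral, rule ballI)
    fix v assume "v \<in> t - {basis_elt D}"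
    then obtain D' where "v = basis_elt D'" "D' \<noteq> D" using t by blast
    then show "c v * v D = 0" by (simp add: basis_elt_def)
  qed
  finally show False using D by (simp add: basis_elt_def)
qed

lemma inj_basis_elt: "inj (basis_elt :: diagram \<Rightarrow> diagram \<Rightarrow> 'a::comm_ring_1)"
  by (rule injI) (metis basis_elt_def one_neq_zero)

lemma finite_sym_diagrams: "finite (sym_diagrams N)"
  using finite_stable_matchings[OF finite_dots] by (simp add: sym_diagrams_stable)

lemma SBr_eq: "(SBr N :: (diagram \<Rightarrow> 'a::comm_ring_1) set) = {x. \<forall>D. D \<notin> sym_diagrams N \<longrightarrow> x D = 0}"
  unfolding SBr_def using span_basis[OF finite_sym_diagrams] .

text \<open>Products of symmetric elements are symmetric, since the concatenation of symmetric
  diagrams is symmetric.\<close>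
lemma SBr_mult_closed:
  assumes x: "x \<in> SBr N" and y: "y \<in> SBr N"
  shows "br_mult N \<delta> x y \<in> SBr N"
proof -
  have "br_mult N \<delta> x y D = 0" if D: "D \<notin> sym_diagrams N" for D
    unfolding br_mult_def
  proof (intro sum.neutral ballI)
    fix d1 d2
    have "x d1 = 0 \<or> y d2 = 0" if "concat N d1 d2 = D"
      using x y D concat_sym[of d1 N d2] that by (auto simp: SBr_eq)
    then show "(if concat N d1 d2 = D then x d1 * y d2 * \<delta> ^ loops N d1 d2 else 0) = 0"
      by auto
  qed
  then show ?thesis by (simp add: SBr_eq)
qed

text \<open>The main theorem: the count of symmetric diagrams, and SBr is a unital subalgebra, free
  on the symmetric diagrams.\<close>
theorem mainTheorem2:
  fixes n :: nat and \<delta> :: "'a::comm_ring_1"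
  assumes "n \<ge> 1" and "\<delta> dvd 1"
  shows "card (sym_diagrams (2 * n)) = a_seq (2 * n)
    \<and> (SBr (2 * n) :: (diagram \<Rightarrow> 'a) set) \<subseteq> Br (2 * n)
    \<and> br_one (2 * n) \<in> (SBr (2 * n) :: (diagram \<Rightarrow> 'a) set)
    \<and> (\<forall>x\<in>SBr (2 * n). \<forall>y\<in>SBr (2 * n). br_mult (2 * n) \<delta> x y \<in> SBr (2 * n))
    \<and> \<not> module.dependent br_scale (basis_elt ` sym_diagrams (2 * n) :: (diagram \<Rightarrow> 'a) set)
    \<and> card (basis_elt ` sym_diagrams (2 * n) :: (diagram \<Rightarrow> 'a) set) = a_seq (2 * n)"
proof -
  have card: "card (sym_diagrams (2 * n)) = a_seq (2 * n)" by (simp add: card_sym_diagrams)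
  moreover have "(SBr (2 * n) :: (diagram \<Rightarrow> 'a) set) \<subseteq> Br (2 * n)"
    by (auto simp: SBr_eq Br_def sym_diagrams_def)
  moreover have "br_one (2 * n) \<in> (SBr (2 * n) :: (diagram \<Rightarrow> 'a) set)"
    using id_sym by (auto simp: SBr_eq br_one_def basis_elt_def)
  moreover have "card (basis_elt ` sym_diagrams (2 * n) :: (diagram \<Rightarrow> 'a) set) = a_seq (2 * n)"
    using card card_image[OF inj_on_subset[OF inj_basis_elt subset_UNIV]] by metis
  ultimately show ?thesis using SBr_mult_closed basis_independent by blast
qed

end
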